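(* Let $p\ge 0$ and $n\ge 1$. A permutation $\sigma$ of $[n]$ belongs to the basis $\mathcal{B}_p$ if and only if all of the following hold: (i) $\sigma$ has exactly $p+1$ non-left-to-right-maxima; (ii) the value $n-1$ is a non-left-to-right-maximum of $\sigma$; (iii) $\sigma_2$ is a non-left-to-right-maximum of $\sigma$; (iv) for any three left-to-right maxima $\sigma_i,\sigma_j,\sigma_k$ with $i<j<k$ such that no other left-to-right maximum lies at a position strictly between $i$ and $k$, there exists a non-left-to-right-maximum $\sigma_t$ with $j<t<k$ and $\sigma_t>\sigma_i$.
   Context: Permutations of $[n]$ are written as words $\sigma=\sigma_1\cdots\sigma_n$. A right-jump transforms $\sigma$ into $\sigma_1\cdots\sigma_{i-1}\sigma_{i+1}\cdots\sigma_j\sigma_i\sigma_{j+1}\cdots\sigma_n$ for some $1\le i<j\le n$. A left-to-right maximum of $\sigma$ is an entry $\sigma_i$ such that $\sigma_k<\sigma_i$ for all $k<i$; every other entry is a non-left-to-right-maximum. A permutation $\pi$ of $[k]$ is a pattern of $\sigma$ (written $\pi\prec\sigma$) if some subsequence $\sigma_{i_1}\cdots\sigma_{i_k}$ ($i_1<\dots<i_k$) is order-isomorphic to $\pi$. $\mathcal{C}_p$ is the set of all permutations (of any length $n$) obtainable from the identity $12\cdots n$ by at most $p$ right-jumps; it is closed under taking patterns. The basis $\mathcal{B}_p$ is the set of permutations $\sigma\notin\mathcal{C}_p$ such that every pattern $\pi\prec\sigma$ with $\pi\ne\sigma$ lies in $\mathcal{C}_p$; then $\mathcal{C}_p$ is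 exactly the set of permutations avoiding every element of $\mathcal{B}_p$. *)

theory Defs
  imports Main
begin

text \<open>Permutations of [n] are lists of length n with entry set {1..n}.
  Positions in lists are 0-indexed (position i of the list = position i+1 of the paper).\<close>

definition is_perm :: "nat \<Rightarrow> nat list \<Rightarrow> bool" where
  "is_perm n \<sigma> \<longleftrightarrow> length \<sigma> = n \<and> distinct \<sigma> \<and> set \<sigma> = {1..n}"

text \<open>Right-jump moving the entry at 0-indexed position i to just after position j (i < j).\<close>
definition right_jump :: "nat list \<Rightarrow> nat \<Rightarrow> nat \<Rightarrow> nat list" where
  "right_jump \<sigma> i j = take i \<sigma> @ take (j - i) (drop (Suc i) \<sigma>) @ [\<sigma> ! i] @ drop (Suc j) \<sigma>"

definition rj_step :: "nat list \<Rightarrow> nat list \<Rightarrow> bool" where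
  "rj_step \<sigma> \<tau> \<longleftrightarrow> (\<exists>i j. i < j \<and> j < length \<sigma> \<and> \<tau> = right_jump \<sigma> i j)"

definition Cp :: "nat \<Rightarrow> nat list set" where
  "Cp p = {\<sigma>. \<exists>n k. k \<le> p \<and> (rj_step ^^ k) [1..<Suc n] \<sigma>}"

definition order_iso :: "nat list \<Rightarrow> nat list \<Rightarrow> bool" where
  "order_iso \<pi> \<tau> \<longleftrightarrow> length \<pi> = length \<tau> \<and>
     (\<forall>a < length \<pi>. \<forall>b < length \<pi>. \<pi> ! a < \<pi> ! b \<longleftrightarrow> \<tau> ! a < \<tau> ! b)"

definition is_pattern :: "nat list \<Rightarrow> nat list \<Rightarrow> bool" where
  "is_pattern \<pi> \<sigma> \<longleftrightarrow> is_perm (length \<pi>) \<pi> \<and> (\<exists>I. order_iso \<pi> (nths \<sigma> I))"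

definition basis :: "nat \<Rightarrow> nat list set" where
  "basis p = {\<sigma>. is_perm (length \<sigma>) \<sigma> \<and> \<sigma> \<notin> Cp p \<and>
      (\<forall>\<pi>. is_pattern \<pi> \<sigma> \<and> \<pi> \<noteq> \<sigma> \<longrightarrow> \<pi> \<in> Cp p)}"

definition ltr_max :: "nat list \<Rightarrow> nat \<Rightarrow> bool" where
  "ltr_max \<sigma> i \<longleftrightarrow> (\<forall>k < i. \<sigma> ! k < \<sigma> ! i)"

end

theory Submission
  imports Defs
begin

text \<open>
  A right jump moves one entry to the right, which can create at most one new
  non-left-to-right maximum; conversely, moving the first non-left-to-right maximum
  back into its place in the increasing prefix before it removes exactly one, and is
  undone by a right jump. Hence \<open>C\<^sub>p\<close> consists of the permutations with at most
  \<open>p\<close> non-left-to-right maxima. Deleting entries never creates non-left-to-right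
  maxima, so \<open>\<sigma>\<close> lies in the basis iff it has \<open>p + 1\<close> of them and every single
  deletion destroys one. Deleting a non-left-to-right maximum always does; deleting
  a left-to-right maximum \<open>\<sigma>\<^sub>m\<close> does iff some non-left-to-right maximum has \<open>\<sigma>\<^sub>m\<close>
  as its only larger predecessor. For the first entry, for the entry \<open>n\<close>, and for the
  left-to-right maxima in between, this is condition (iii), (ii) and (iv) respectively.
\<close>

section \<open>Non-left-to-right maxima\<close>

lemma not_ltr_max_iff: "\<not> ltr_max xs i \<longleftrightarrow> (\<exists>k<i. xs ! i \<le> xs ! k)"
  unfolding ltr_max_def by auto

text \<open>The non-left-to-right maxima of the subsequence \<open>nths xs I\<close>, recorded by their
  positions in \<open>xs\<close>.\<close>

definition nonmaxima_on :: "nat list \<Rightarrow> nat set \<Rightarrow> nat set" where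
  "nonmaxima_on xs I = {i\<in>I. i < length xs \<and> (\<exists>j\<in>I. j < i \<and> xs ! i \<le> xs ! j)}"

abbreviation nonmaxima :: "nat list \<Rightarrow> nat set" where
  "nonmaxima xs \<equiv> nonmaxima_on xs UNIV"

lemma nonmaxima_eq: "nonmaxima xs = {i. i < length xs \<and> \<not> ltr_max xs i}"
  unfolding nonmaxima_on_def not_ltr_max_iff by auto

lemma finite_nonmaxima_on [simp]: "finite (nonmaxima_on xs I)"
  unfolding nonmaxima_on_def by (rule finite_subset[of _ "{..<length xs}"]) auto

lemma nonmaxima_on_mono: "I \<subseteq> J \<Longrightarrow> nonmaxima_on xs I \<subseteq> nonmaxima_on xs J"
  unfolding nonmaxima_on_def by blast

lemma nonmaxima_on_snoc:
  "nonmaxima_on (xs @ [x]) I = nonmaxima_on xs I \<union>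
     (if length xs \<in> I \<and> (\<exists>j\<in>I. j < length xs \<and> x \<le> xs ! j) then {length xs} else {})"
proof (rule set_eqI)
  fix i
  have prefix: "(xs @ [x]) ! j = xs ! j" if "j < length xs" for j
    using that by (simp add: nth_append)
  consider "i < length xs" | "i = length xs" | "length xs < i"
    by linarith
  then show "i \<in> nonmaxima_on (xs @ [x]) I \<longleftrightarrow> i \<in> nonmaxima_on xs I \<union>
     (if length xs \<in> I \<and> (\<exists>j\<in>I. j < length xs \<and> x \<le> xs ! j) then {length xs} else {})"
  proof cases
    case 1
    then show ?thesis
      unfolding nonmaxima_on_def using prefix by (auto intro: order.strict_trans)
  next
    case 2
    then show ?thesis
      unfolding nonmaxima_on_def using prefix by auto
  qed (simp add: nonmaxima_on_def)
qed

lemma card_nonmaxima_on_snoc: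
  "card (nonmaxima_on (xs @ [x]) I) = card (nonmaxima_on xs I) +
     (if length xs \<in> I \<and> (\<exists>j\<in>I. j < length xs \<and> x \<le> xs ! j) then 1 else 0)"
proof -
  have "length xs \<notin> nonmaxima_on xs I"
    unfolding nonmaxima_on_def by simp
  then show ?thesis
    unfolding nonmaxima_on_snoc by simp
qed

lemma card_nonmaxima_snoc:
  "card (nonmaxima (xs @ [x])) = card (nonmaxima xs) + (if \<exists>z\<in>set xs. x \<le> z then 1 else 0)"
proof -
  have "(\<exists>j<length xs. x \<le> xs ! j) \<longleftrightarrow> (\<exists>z\<in>set xs. x \<le> z)"
    by (metis in_set_conv_nth)
  then show ?thesis
    by (simp add: card_nonmaxima_on_snoc)
qed

lemma card_nonmaxima_nths: "card (nonmaxima (nths xs I)) = card (nonmaxima_on xs I)"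
proof (induction xs rule: rev_induct)
  case (snoc x xs)
  show ?case
  proof (cases "length xs \<in> I")
    case True
    have "nths (xs @ [x]) I = nths xs I @ [x]"
      using True by (simp add: nths_append)
    then have "card (nonmaxima (nths (xs @ [x]) I)) = card (nonmaxima (nths xs I)) +
        (if \<exists>z\<in>set (nths xs I). x \<le> z then 1 else 0)"
      by (simp add: card_nonmaxima_snoc)
    moreover have "(\<exists>z\<in>set (nths xs I). x \<le> z) \<longleftrightarrow> (\<exists>j\<in>I. j < length xs \<and> x \<le> xs ! j)"
      unfolding set_nths by blast
    ultimately show ?thesis
      using True by (simp add: card_nonmaxima_on_snoc snoc.IH)
  next
    case False
    then show ?thesis
      using snoc.IH by (simp add: nths_append card_nonmaxima_on_snoc)
  qed
qed (simp add: nonmaxima_on_def)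

lemma order_iso_nonmaxima: "order_iso \<pi> \<tau> \<Longrightarrow> nonmaxima \<pi> = nonmaxima \<tau>"
  unfolding order_iso_def nonmaxima_on_def by (auto simp: not_less[symmetric])

text \<open>An accumulating form of \<open>card (nonmaxima ys)\<close> that splits over \<open>@\<close>; \<open>M\<close> holds the
  entries preceding \<open>ys\<close>.\<close>

fun count_dominated :: "nat set \<Rightarrow> nat list \<Rightarrow> nat" where
  "count_dominated M [] = 0"
| "count_dominated M (y # ys) =
     (if \<exists>z\<in>M. y \<le> z then 1 else 0) + count_dominated (insert y M) ys"

lemma count_dominated_append:
  "count_dominated M (xs @ ys) = count_dominated M xs + count_dominated (M \<union> set xs) ys"
  by (induction xs arbitrary: M) auto

lemma count_dominated_mono: "M \<subseteq> M' \<Longrightarrow> count_dominated M ys \<le> count_dominated M' ys"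
proof (induction ys arbitrary: M M')
  case (Cons y ys)
  then have "count_dominated (insert y M) ys \<le> count_dominated (insert y M') ys"
    by (meson insert_mono)
  then show ?case
    using Cons.prems by auto
qed simp

lemma count_dominated_eq_0_iff:
  "count_dominated M ys = 0 \<longleftrightarrow> sorted_wrt (<) ys \<and> (\<forall>a\<in>set ys. \<forall>z\<in>M. z < a)"
  by (induction ys arbitrary: M) (auto simp: not_le not_less)

lemma card_nonmaxima_eq_count_dominated: "card (nonmaxima xs) = count_dominated {} xs"
proof (induction xs rule: rev_induct)
  case (snoc x xs)
  then show ?case
    by (simp add: card_nonmaxima_snoc count_dominated_append)
qed (simp add: nonmaxima_on_def)

lemma count_dominated_nonzeroE:
  assumes "count_dominated M ys \<noteq> 0"
  obtains A x C where "ys = A @ x # C" "count_dominated M A = 0" "\<exists>z\<in>M \<union> set A. x \<le> z"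
  using assms
proof (induction ys arbitrary: M thesis)
  case (Cons y ys)
  show ?case
  proof (cases "\<exists>z\<in>M. y \<le> z")
    case True
    then show ?thesis
      using Cons.prems(1)[of "[]"] by simp
  next
    case False
    then have "count_dominated (insert y M) ys \<noteq> 0"
      using Cons.prems(2) by simp
    then obtain A x C where "ys = A @ x # C" "count_dominated (insert y M) A = 0"
        "\<exists>z\<in>insert y M \<union> set A. x \<le> z"
      using Cons.IH by blast
    then show ?thesis
      using False Cons.prems(1)[of "y # A"] by simp
  qed
qed simp

section \<open>Right jumps and the class \<open>C\<^sub>p\<close>\<close>

lemma is_perm_move_right: "is_perm n (A @ x # B @ C) \<longleftrightarrow> is_perm n (A @ B @ x # C)"
  unfolding is_perm_def by auto

lemma rj_step_iff:
  "rj_step \<sigma> \<tau> \<longleftrightarrow> (\<exists>A x B C. B \<noteq> [] \<and> \<sigma> = A @ x # B @ C \<and> \<tau> = A @ B @ x # C)"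
proof
  assume "rj_step \<sigma> \<tau>"
  then obtain i j where ij: "i < j" "j < length \<sigma>" and \<tau>: "\<tau> = right_jump \<sigma> i j"
    unfolding rj_step_def by blast
  define B where "B = take (j - i) (drop (Suc i) \<sigma>)"
  have "drop (j - i) (drop (Suc i) \<sigma>) = drop (Suc j) \<sigma>"
    using ij by simp
  then have "drop (Suc i) \<sigma> = B @ drop (Suc j) \<sigma>"
    unfolding B_def by (metis append_take_drop_id)
  moreover have "\<sigma> = take i \<sigma> @ \<sigma> ! i # drop (Suc i) \<sigma>"
    using ij by (intro id_take_nth_drop) simp
  ultimately have "\<sigma> = take i \<sigma> @ \<sigma> ! i # B @ drop (Suc j) \<sigma>"
    by simp
  moreover have "B \<noteq> []"
    using ij unfolding B_def by simp
  moreover have "\<tau> = take i \<sigma> @ B @ \<sigma> ! i # drop (Suc j) \<sigma>"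
    unfolding \<tau> right_jump_def B_def by simp
  ultimately show "\<exists>A x B C. B \<noteq> [] \<and> \<sigma> = A @ x # B @ C \<and> \<tau> = A @ B @ x # C"
    by blast
next
  assume "\<exists>A x B C. B \<noteq> [] \<and> \<sigma> = A @ x # B @ C \<and> \<tau> = A @ B @ x # C"
  then obtain A x B C where "B \<noteq> []" "\<sigma> = A @ x # B @ C" "\<tau> = A @ B @ x # C"
    by blast
  then show "rj_step \<sigma> \<tau>"
    unfolding rj_step_def right_jump_def
    by (intro exI[of _ "length A"] exI[of _ "length A + length B"]) auto
qed

lemma card_nonmaxima_move_right:
  "card (nonmaxima (A @ B @ x # C)) \<le> card (nonmaxima (A @ x # B @ C)) + 1"
proof -
  have "count_dominated (set A) B \<le> count_dominated (insert x (set A)) B"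
    by (rule count_dominated_mono) auto
  moreover have "insert x (set A \<union> set B) = insert x (set A) \<union> set B"
    by auto
  ultimately show ?thesis
    unfolding card_nonmaxima_eq_count_dominated by (simp add: count_dominated_append)
qed

lemma rj_step_card_nonmaxima:
  assumes "is_perm n \<sigma>" "rj_step \<sigma> \<tau>"
  shows "is_perm n \<tau>" "card (nonmaxima \<tau>) \<le> card (nonmaxima \<sigma>) + 1"
proof -
  obtain A x B C where "\<sigma> = A @ x # B @ C" "\<tau> = A @ B @ x # C"
    using assms(2) unfolding rj_step_iff by blast
  then show "is_perm n \<tau>" "card (nonmaxima \<tau>) \<le> card (nonmaxima \<sigma>) + 1"
    using assms(1) is_perm_move_right card_nonmaxima_move_right by simp_all
qed

lemma rj_steps_card_nonmaxima:
  assumes "(rj_step ^^ k) \<sigma> \<tau>" "is_perm n \<sigma>"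
  shows "is_perm n \<tau> \<and> card (nonmaxima \<tau>) \<le> card (nonmaxima \<sigma>) + k"
  using assms
proof (induction k arbitrary: \<tau>)
  case (Suc k)
  then obtain \<rho> where "(rj_step ^^ k) \<sigma> \<rho>" "rj_step \<rho> \<tau>"
    by auto
  with Suc.IH Suc.prems(2) rj_step_card_nonmaxima[of n \<rho> \<tau>] show ?case
    by fastforce
qed simp

lemma sorted_wrt_less_split:
  assumes "sorted_wrt (<) A"
  obtains A1 A2 where "A = A1 @ A2" "\<forall>a\<in>set A1. a < x" "\<forall>b\<in>set A2. x \<le> (b::nat)"
  using assms
proof (induction A arbitrary: thesis)
  case (Cons a A)
  show ?case
  proof (cases "a < x")
    case True
    obtain A1 A2 where "A = A1 @ A2" "\<forall>a\<in>set A1. a < x" "\<forall>b\<in>set A2. x \<le> b"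
      using Cons.IH Cons.prems(2) by auto
    then show ?thesis
      using True Cons.prems(1)[of "a # A1" A2] by simp
  next
    case False
    then show ?thesis
      using Cons.prems Cons.prems(1)[of "[]" "a # A"] by fastforce
  qed
qed simp

lemma sorted_wrt_less_insert:
  fixes x :: nat
  assumes "sorted_wrt (<) A" "x \<notin> set A"
  obtains A1 A2 where "A = A1 @ A2" "\<forall>a\<in>set A1. a < x" "sorted_wrt (<) (A1 @ x # A2)"
proof -
  obtain A1 A2 where A: "A = A1 @ A2" "\<forall>a\<in>set A1. a < x" "\<forall>b\<in>set A2. x \<le> b"
    using assms(1) by (rule sorted_wrt_less_split)
  then have "\<forall>b\<in>set A2. x < b"
    using assms(2) by (auto simp: le_less)
  then have "sorted_wrt (<) (A1 @ x # A2)"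
    using assms(1) A by (auto simp: sorted_wrt_append)
  with A show ?thesis
    using that by blast
qed

text \<open>The first non-left-to-right maximum \<open>x\<close> follows an increasing prefix \<open>A\<close>; moving \<open>x\<close>
  back into its place in \<open>A\<close> removes one non-left-to-right maximum.\<close>

lemma exists_rj_step_predecessor:
  assumes perm: "is_perm n \<sigma>" and card: "card (nonmaxima \<sigma>) = Suc m"
  obtains \<sigma>' where "is_perm n \<sigma>'" "card (nonmaxima \<sigma>') = m" "rj_step \<sigma>' \<sigma>"
proof -
  have "count_dominated {} \<sigma> \<noteq> 0"
    using card by (simp add: card_nonmaxima_eq_count_dominated)
  then obtain A x C where \<sigma>: "\<sigma> = A @ x # C" and A: "count_dominated {} A = 0"
      and dominated: "\<exists>z\<in>set A. x \<le> z"
    by (rule count_dominated_nonzeroE) simp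
  have "sorted_wrt (<) A"
    using A by (simp add: count_dominated_eq_0_iff)
  moreover have "x \<notin> set A"
    using perm \<sigma> by (simp add: is_perm_def)
  ultimately obtain A1 A2 where A12: "A = A1 @ A2" and low: "\<forall>a\<in>set A1. a < x"
      and sorted: "sorted_wrt (<) (A1 @ x # A2)"
    by (rule sorted_wrt_less_insert)
  have "A2 \<noteq> []"
    using dominated low A12 by force
  from sorted have "count_dominated {} (A1 @ x # A2) = 0"
    by (simp add: count_dominated_eq_0_iff)
  moreover have "set (A1 @ x # A2) = insert x (set A)"
    using A12 by auto
  ultimately have "card (nonmaxima ((A1 @ x # A2) @ C)) = count_dominated (insert x (set A)) C"
    unfolding card_nonmaxima_eq_count_dominated count_dominated_append by simp
  moreover have "card (nonmaxima \<sigma>) = Suc (count_dominated (insert x (set A)) C)"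
    unfolding card_nonmaxima_eq_count_dominated \<sigma> using A dominated
    by (simp add: count_dominated_append)
  moreover have "is_perm n (A1 @ x # A2 @ C)"
    using perm is_perm_move_right \<sigma> A12 by simp
  moreover have "rj_step (A1 @ x # A2 @ C) \<sigma>"
    unfolding rj_step_iff using \<open>A2 \<noteq> []\<close> \<sigma> A12 by auto
  ultimately show ?thesis
    using card that[of "A1 @ x # A2 @ C"] by simp
qed

lemma rj_steps_from_identity: "is_perm n \<sigma> \<Longrightarrow> (rj_step ^^ card (nonmaxima \<sigma>)) [1..<Suc n] \<sigma>"
proof (induction "card (nonmaxima \<sigma>)" arbitrary: \<sigma>)
  case 0
  then have "count_dominated {} \<sigma> = 0"
    by (simp add: card_nonmaxima_eq_count_dominated)
  then have "sorted_wrt (<) \<sigma>"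
    by (simp add: count_dominated_eq_0_iff)
  moreover have "set \<sigma> = set [1..<Suc n]"
    using "0.prems" by (simp add: is_perm_def atLeastLessThanSuc_atLeastAtMost del: upt_Suc)
  ultimately have "\<sigma> = [1..<Suc n]"
    by (intro sorted_distinct_set_unique) (simp_all add: strict_sorted_iff del: upt_Suc)
  then show ?case
    using "0.hyps" by simp
next
  case (Suc m)
  obtain \<sigma>' where \<sigma>': "is_perm n \<sigma>'" "card (nonmaxima \<sigma>') = m" and step: "rj_step \<sigma>' \<sigma>"
    by (rule exists_rj_step_predecessor[OF Suc.prems Suc.hyps(2)[symmetric]])
  have "(rj_step ^^ m) [1..<Suc n] \<sigma>'"
    using Suc.hyps(1)[of \<sigma>'] \<sigma>' by (simp del: upt_Suc)
  then show ?case
    unfolding Suc.hyps(2)[symmetric] using step by (rule relpowp_Suc_I)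
qed

lemma Cp_iff: "\<sigma> \<in> Cp p \<longleftrightarrow> is_perm (length \<sigma>) \<sigma> \<and> card (nonmaxima \<sigma>) \<le> p"
proof
  assume "\<sigma> \<in> Cp p"
  then obtain n k where "k \<le> p" and steps: "(rj_step ^^ k) [1..<Suc n] \<sigma>"
    unfolding Cp_def by blast
  have id: "is_perm n [1..<Suc n]" "nonmaxima [1..<Suc n] = {}"
    unfolding is_perm_def nonmaxima_on_def by (auto simp: leD simp del: upt_Suc)
  have "is_perm n \<sigma> \<and> card (nonmaxima \<sigma>) \<le> card (nonmaxima [1..<Suc n]) + k"
    by (rule rj_steps_card_nonmaxima[OF steps id(1)])
  then show "is_perm (length \<sigma>) \<sigma> \<and> card (nonmaxima \<sigma>) \<le> p"
    using id(2) \<open>k \<le> p\<close> by (auto simp: is_perm_def simp del: upt_Suc)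
next
  assume "is_perm (length \<sigma>) \<sigma> \<and> card (nonmaxima \<sigma>) \<le> p"
  then show "\<sigma> \<in> Cp p"
    unfolding Cp_def using rj_steps_from_identity by blast
qed

section \<open>Patterns and the basis\<close>

lemma card_entries_le_nth:
  assumes perm: "is_perm n \<sigma>" and a: "a < n"
  shows "card {b. b < n \<and> \<sigma> ! b \<le> \<sigma> ! a} = \<sigma> ! a"
proof -
  have len: "length \<sigma> = n" and dist: "distinct \<sigma>" and set: "set \<sigma> = {1..n}"
    using perm unfolding is_perm_def by auto
  have "(!) \<sigma> ` {b. b < n \<and> \<sigma> ! b \<le> \<sigma> ! a} = {v \<in> set \<sigma>. v \<le> \<sigma> ! a}"
    using len by (auto simp: in_set_conv_nth)
  also have "\<dots> = {1..\<sigma> ! a}"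
    using set nth_mem[of a \<sigma>] a len by auto
  finally have "(!) \<sigma> ` {b. b < n \<and> \<sigma> ! b \<le> \<sigma> ! a} = {1..\<sigma> ! a}" .
  moreover have "inj_on ((!) \<sigma>) {b. b < n \<and> \<sigma> ! b \<le> \<sigma> ! a}"
    using dist len by (intro inj_on_nth) auto
  ultimately show ?thesis
    using card_image by fastforce
qed

lemma order_iso_perm_eq:
  assumes "is_perm n \<pi>" "is_perm n \<sigma>" "order_iso \<pi> \<sigma>"
  shows "\<pi> = \<sigma>"
proof (rule nth_equalityI)
  have len: "length \<pi> = n" "length \<sigma> = n"
    using assms unfolding is_perm_def by auto
  then show "length \<pi> = length \<sigma>"
    by simp
  fix a
  assume "a < length \<pi>"
  then have a: "a < n"
    using len by simp
  have "{b. b < n \<and> \<pi> ! b \<le> \<pi> ! a} = {b. b < n \<and> \<sigma> ! b \<le> \<sigma> ! a}"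
    using assms(3) a len unfolding order_iso_def by (auto simp: not_less[symmetric])
  then show "\<pi> ! a = \<sigma> ! a"
    using card_entries_le_nth[OF assms(1) a] card_entries_le_nth[OF assms(2) a] by simp
qed

lemma card_le_less_card_le_iff:
  fixes y y' :: "'a::linorder"
  assumes "finite S" "y' \<in> S"
  shows "card {z \<in> S. z \<le> y} < card {z \<in> S. z \<le> y'} \<longleftrightarrow> y < y'"
proof
  assume "y < y'"
  then have "{z \<in> S. z \<le> y} \<subseteq> {z \<in> S. z \<le> y'}" "y' \<in> {z \<in> S. z \<le> y'} - {z \<in> S. z \<le> y}"
    using assms(2) by auto
  then have "{z \<in> S. z \<le> y} \<subset> {z \<in> S. z \<le> y'}"
    by blast
  then show "card {z \<in> S. z \<le> y} < card {z \<in> S. z \<le> y'}"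
    using assms(1) by (simp add: psubset_card_mono)
next
  assume "card {z \<in> S. z \<le> y} < card {z \<in> S. z \<le> y'}"
  moreover have "card {z \<in> S. z \<le> y'} \<le> card {z \<in> S. z \<le> y}" if "y' \<le> y"
    using assms(1) that by (intro card_mono) auto
  ultimately show "y < y'"
    by (meson not_le order.asym)
qed

lemma exists_order_iso_perm:
  assumes "distinct ys"
  obtains \<pi> where "is_perm (length ys) \<pi>" "order_iso \<pi> ys"
proof -
  define rank where "rank y = card {z \<in> set ys. z \<le> y}" for y :: nat
  have rank_less_iff: "rank y < rank y' \<longleftrightarrow> y < y'" if "y' \<in> set ys" for y y'
    unfolding rank_def using that by (simp add: card_le_less_card_le_iff)
  define \<pi> where "\<pi> = map rank ys"
  have iso: "order_iso \<pi> ys"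
    unfolding order_iso_def \<pi>_def using rank_less_iff by simp
  have "inj_on rank (set ys)"
    using rank_less_iff by (metis inj_onI less_irrefl linorder_neqE_nat)
  then have dist: "distinct \<pi>"
    unfolding \<pi>_def using assms by (simp add: distinct_map)
  have "set \<pi> \<subseteq> {1..length ys}"
  proof
    fix v
    assume "v \<in> set \<pi>"
    then obtain y where y: "y \<in> set ys" "v = rank y"
      unfolding \<pi>_def by auto
    have "rank y \<le> card (set ys)"
      unfolding rank_def by (intro card_mono) auto
    moreover have "0 < rank y"
      unfolding rank_def using y(1) by (auto simp: card_gt_0_iff)
    ultimately show "v \<in> {1..length ys}"
      using y assms by (simp add: distinct_card)
  qed
  moreover have "card (set \<pi>) = length ys"
    using distinct_card[OF dist] by (simp add: \<pi>_def)
  ultimately have "set \<pi> = {1..length ys}"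
    by (intro card_subset_eq) auto
  then have "is_perm (length ys) \<pi>"
    unfolding is_perm_def \<pi>_def using dist \<pi>_def by simp
  then show ?thesis
    using iso by (rule that)
qed

lemma card_nonmaxima_pattern:
  "order_iso \<pi> (nths \<sigma> I) \<Longrightarrow> card (nonmaxima \<pi>) = card (nonmaxima_on \<sigma> I)"
  by (simp add: order_iso_nonmaxima card_nonmaxima_nths)

lemma deletion_pattern:
  assumes perm: "is_perm n \<sigma>" and m: "m < n"
  obtains \<pi> where "is_pattern \<pi> \<sigma>" "\<pi> \<noteq> \<sigma>" "card (nonmaxima \<pi>) = card (nonmaxima_on \<sigma> (-{m}))"
proof -
  have len: "length \<sigma> = n" and "distinct \<sigma>"
    using perm unfolding is_perm_def by auto
  then obtain \<pi> where \<pi>: "is_perm (length (nths \<sigma> (-{m}))) \<pi>" "order_iso \<pi> (nths \<sigma> (-{m}))"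
    using exists_order_iso_perm distinct_nthsI by blast
  have "{i. i < length \<sigma> \<and> i \<in> -{m}} = {..<n} - {m}"
    using len by auto
  then have "length \<pi> = n - 1"
    using \<pi>(2) m unfolding order_iso_def by (simp add: length_nths)
  then have "\<pi> \<noteq> \<sigma>"
    using m len by auto
  moreover have "is_pattern \<pi> \<sigma>"
    unfolding is_pattern_def using \<pi> by (metis order_iso_def)
  ultimately show ?thesis
    using that card_nonmaxima_pattern[OF \<pi>(2)] by blast
qed

lemma proper_pattern_omits_position:
  assumes perm: "is_perm n \<sigma>" and \<pi>: "is_perm (length \<pi>) \<pi>" "order_iso \<pi> (nths \<sigma> I)"
    and "\<pi> \<noteq> \<sigma>"
  obtains m where "m < n" "m \<notin> I"
proof (rule ccontr)
  assume "\<not> thesis"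
  then have "nths \<sigma> I = \<sigma>"
    using that perm by (intro nths_all) (auto simp: is_perm_def)
  then have "\<pi> = \<sigma>"
    using \<pi> perm order_iso_perm_eq by (metis order_iso_def is_perm_def)
  with \<open>\<pi> \<noteq> \<sigma>\<close> show False
    by simp
qed

text \<open>Every proper pattern is a pattern of a single-entry deletion, and deleting entries
  can only remove non-left-to-right maxima.\<close>

lemma basis_iff_deletions:
  assumes perm: "is_perm n \<sigma>"
  shows "\<sigma> \<in> basis p \<longleftrightarrow>
    p < card (nonmaxima \<sigma>) \<and> (\<forall>m<n. card (nonmaxima_on \<sigma> (-{m})) \<le> p)"
proof
  assume basis: "\<sigma> \<in> basis p"
  have "card (nonmaxima_on \<sigma> (-{m})) \<le> p" if m: "m < n" for m
  proof -
    obtain \<pi> where "is_pattern \<pi> \<sigma>" "\<pi> \<noteq> \<sigma>" "card (nonmaxima \<pi>) = card (nonmaxima_on \<sigma> (-{m}))"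
      using perm m by (rule deletion_pattern)
    with basis show ?thesis
      unfolding basis_def by (auto simp: Cp_iff)
  qed
  with basis show "p < card (nonmaxima \<sigma>) \<and> (\<forall>m<n. card (nonmaxima_on \<sigma> (-{m})) \<le> p)"
    unfolding basis_def Cp_iff by auto
next
  assume deletions: "p < card (nonmaxima \<sigma>) \<and> (\<forall>m<n. card (nonmaxima_on \<sigma> (-{m})) \<le> p)"
  have "\<pi> \<in> Cp p" if pattern: "is_pattern \<pi> \<sigma>" "\<pi> \<noteq> \<sigma>" for \<pi>
  proof -
    obtain I where \<pi>: "is_perm (length \<pi>) \<pi>" "order_iso \<pi> (nths \<sigma> I)"
      using pattern(1) unfolding is_pattern_def by blast
    then obtain m where m: "m < n" "m \<notin> I"
      using perm pattern(2) proper_pattern_omits_position by blast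
    then have "nonmaxima_on \<sigma> I \<subseteq> nonmaxima_on \<sigma> (-{m})"
      by (intro nonmaxima_on_mono) auto
    then have "card (nonmaxima_on \<sigma> I) \<le> p"
      using deletions m(1) by (meson card_mono finite_nonmaxima_on le_trans)
    then show "\<pi> \<in> Cp p"
      using \<pi> card_nonmaxima_pattern by (simp add: Cp_iff)
  qed
  then show "\<sigma> \<in> basis p"
    unfolding basis_def using perm deletions by (auto simp: Cp_iff is_perm_def)
qed

section \<open>Deleting a single entry\<close>

text \<open>Deleting the entry at \<open>m\<close> turns the non-left-to-right maximum at \<open>i\<close> into a
  left-to-right maximum.\<close>

definition sole_dominator :: "nat list \<Rightarrow> nat \<Rightarrow> bool" where
  "sole_dominator \<sigma> m \<longleftrightarrow> (\<exists>i<length \<sigma>. \<not> ltr_max \<sigma> i \<and> (\<forall>j<i. j \<noteq> m \<longrightarrow> \<sigma> ! j < \<sigma> ! i))"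

lemma nonmaxima_on_delete_nonmaximum:
  assumes "m \<in> nonmaxima \<sigma>"
  shows "nonmaxima_on \<sigma> (-{m}) = nonmaxima \<sigma> - {m}"
proof
  show "nonmaxima_on \<sigma> (-{m}) \<subseteq> nonmaxima \<sigma> - {m}"
    using nonmaxima_on_mono[of "-{m}" UNIV] by (auto simp: nonmaxima_on_def)
  show "nonmaxima \<sigma> - {m} \<subseteq> nonmaxima_on \<sigma> (-{m})"
  proof
    fix i
    assume "i \<in> nonmaxima \<sigma> - {m}"
    then obtain k where i: "i \<noteq> m" "i < length \<sigma>" "k < i" "\<sigma> ! i \<le> \<sigma> ! k"
      unfolding nonmaxima_on_def by auto
    obtain k' where k': "k' < m" "\<sigma> ! m \<le> \<sigma> ! k'"
      using assms unfolding nonmaxima_on_def by auto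
    have "\<exists>j\<in>-{m}. j < i \<and> \<sigma> ! i \<le> \<sigma> ! j"
    proof (cases "k = m")
      case True
      then show ?thesis
        using i k' by (intro bexI[of _ k']) auto
    next
      case False
      then show ?thesis
        using i by auto
    qed
    then show "i \<in> nonmaxima_on \<sigma> (-{m})"
      using i unfolding nonmaxima_on_def by simp
  qed
qed

lemma nonmaxima_on_delete_ltr_max:
  assumes "ltr_max \<sigma> m"
  shows "nonmaxima_on \<sigma> (-{m}) \<noteq> nonmaxima \<sigma> \<longleftrightarrow> sole_dominator \<sigma> m"
proof -
  have "nonmaxima_on \<sigma> (-{m}) \<subseteq> nonmaxima \<sigma>"
    by (rule nonmaxima_on_mono) simp
  moreover have "m \<notin> nonmaxima \<sigma>"
    using assms by (simp add: nonmaxima_eq)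
  ultimately have "nonmaxima_on \<sigma> (-{m}) \<noteq> nonmaxima \<sigma> \<longleftrightarrow>
      (\<exists>i<length \<sigma>. \<not> ltr_max \<sigma> i \<and> i \<noteq> m \<and> i \<notin> nonmaxima_on \<sigma> (-{m}))"
    by (auto simp: nonmaxima_eq)
  also have "\<dots> \<longleftrightarrow> sole_dominator \<sigma> m"
    unfolding sole_dominator_def nonmaxima_on_def using assms
    by (auto simp: not_le ltr_max_def)
  finally show ?thesis .
qed

lemma basis_iff_sole_dominators:
  assumes perm: "is_perm n \<sigma>"
  shows "\<sigma> \<in> basis p \<longleftrightarrow>
    card (nonmaxima \<sigma>) = p + 1 \<and> (\<forall>m<n. ltr_max \<sigma> m \<longrightarrow> sole_dominator \<sigma> m)"
proof -
  have len: "length \<sigma> = n"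
    using perm by (simp add: is_perm_def)
  have delete_nonmaximum: "card (nonmaxima_on \<sigma> (-{m})) = card (nonmaxima \<sigma>) - 1"
    if "m \<in> nonmaxima \<sigma>" for m
    using that by (simp add: nonmaxima_on_delete_nonmaximum)
  have delete_ltr_max: "card (nonmaxima_on \<sigma> (-{m})) < card (nonmaxima \<sigma>) \<longleftrightarrow> sole_dominator \<sigma> m"
    if "ltr_max \<sigma> m" for m
  proof -
    have "nonmaxima_on \<sigma> (-{m}) \<subseteq> nonmaxima \<sigma>"
      by (rule nonmaxima_on_mono) simp
    then show ?thesis
      using nonmaxima_on_delete_ltr_max[OF that]
      by (metis card_subset_eq finite_nonmaxima_on psubset_card_mono psubset_eq less_irrefl)
  qed
  have nonmaximum: "m \<in> nonmaxima \<sigma> \<longleftrightarrow> m < n \<and> \<not> ltr_max \<sigma> m" for m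
    by (simp add: nonmaxima_eq len)
  show ?thesis
    unfolding basis_iff_deletions[OF perm]
  proof safe
    assume *: "p < card (nonmaxima \<sigma>)" "\<forall>m<n. card (nonmaxima_on \<sigma> (-{m})) \<le> p"
    then obtain m where "m \<in> nonmaxima \<sigma>"
      by (metis card.empty ex_in_conv not_less0)
    then show "card (nonmaxima \<sigma>) = p + 1"
      using * delete_nonmaximum nonmaximum by fastforce
    then show "sole_dominator \<sigma> m" if "m < n" "ltr_max \<sigma> m" for m
      using * that delete_ltr_max by fastforce
  next
    fix m
    assume "card (nonmaxima \<sigma>) = p + 1" "\<forall>m<n. ltr_max \<sigma> m \<longrightarrow> sole_dominator \<sigma> m" "m < n"
    then show "card (nonmaxima_on \<sigma> (-{m})) \<le> p"
      using delete_nonmaximum delete_ltr_max nonmaximum by (cases "ltr_max \<sigma> m") fastforce+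
  qed simp
qed

section \<open>The conditions of the characterization\<close>

lemma sole_dominatorE:
  assumes "sole_dominator \<sigma> m" "distinct \<sigma>"
  obtains i where "i < length \<sigma>" "\<not> ltr_max \<sigma> i" "\<forall>j<i. j \<noteq> m \<longrightarrow> \<sigma> ! j < \<sigma> ! i"
    "m < i" "\<sigma> ! i < \<sigma> ! m"
proof -
  obtain i where i: "i < length \<sigma>" "\<not> ltr_max \<sigma> i" "\<forall>j<i. j \<noteq> m \<longrightarrow> \<sigma> ! j < \<sigma> ! i"
    using assms(1) unfolding sole_dominator_def by blast
  then obtain k where "k < i" "\<sigma> ! i \<le> \<sigma> ! k"
    by (auto simp: not_ltr_max_iff)
  moreover from this i have "k = m"
    using leD by blast
  moreover have "\<sigma> ! i \<noteq> \<sigma> ! k"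
    using assms(2) i(1) \<open>k < i\<close> by (simp add: nth_eq_iff_index_eq)
  ultimately show ?thesis
    using i that by auto
qed

lemma sole_dominator_0_iff:
  assumes "distinct \<sigma>"
  shows "sole_dominator \<sigma> 0 \<longleftrightarrow> 1 < length \<sigma> \<and> \<not> ltr_max \<sigma> 1"
proof
  assume "sole_dominator \<sigma> 0"
  then obtain i where i: "i < length \<sigma>" "\<not> ltr_max \<sigma> i" "\<forall>j<i. j \<noteq> 0 \<longrightarrow> \<sigma> ! j < \<sigma> ! i"
      "0 < i" "\<sigma> ! i < \<sigma> ! 0"
    using assms by (rule sole_dominatorE)
  show "1 < length \<sigma> \<and> \<not> ltr_max \<sigma> 1"
  proof (cases "i = 1")
    case False
    then have "1 < i"
      using i(4) by simp
    then have "\<sigma> ! 1 < \<sigma> ! 0"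
      using i(3,5) by (metis order.strict_trans zero_neq_one)
    then show ?thesis
      using i False unfolding ltr_max_def by auto
  qed (use i in auto)
next
  assume "1 < length \<sigma> \<and> \<not> ltr_max \<sigma> 1"
  then show "sole_dominator \<sigma> 0"
    unfolding sole_dominator_def by auto
qed

lemma is_perm_nth_in: "is_perm n \<sigma> \<Longrightarrow> i < n \<Longrightarrow> \<sigma> ! i \<in> {1..n}"
  unfolding is_perm_def by (metis nth_mem)

lemma is_perm_nth_eq_iff: "is_perm n \<sigma> \<Longrightarrow> i < n \<Longrightarrow> j < n \<Longrightarrow> \<sigma> ! i = \<sigma> ! j \<longleftrightarrow> i = j"
  unfolding is_perm_def by (simp add: nth_eq_iff_index_eq)

lemma is_perm_position: "is_perm n \<sigma> \<Longrightarrow> v \<in> {1..n} \<Longrightarrow> \<exists>i<n. \<sigma> ! i = v"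
  unfolding is_perm_def by (metis in_set_conv_nth)

lemma is_perm_max_position:
  assumes perm: "is_perm n \<sigma>" and "1 \<le> n"
  obtains M where "M < n" "\<sigma> ! M = n" "ltr_max \<sigma> M" "\<forall>m<n. ltr_max \<sigma> m \<longrightarrow> m \<le> M"
proof -
  obtain M where M: "M < n" "\<sigma> ! M = n"
    using is_perm_position[OF perm] assms(2) by force
  have below: "\<sigma> ! m < n" if "m < n" "m \<noteq> M" for m
    using is_perm_nth_in[OF perm that(1)] is_perm_nth_eq_iff[OF perm that(1) M(1)] that M by auto
  have "ltr_max \<sigma> M"
    unfolding ltr_max_def using M below by simp
  moreover have "m \<le> M" if "m < n" "ltr_max \<sigma> m" for m
    using that M below unfolding ltr_max_def by (metis leI order.asym)
  ultimately show ?thesis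
    using that M by blast
qed

lemma sole_dominator_max_iff:
  assumes perm: "is_perm n \<sigma>" and M: "M < n" "\<sigma> ! M = n"
  shows "sole_dominator \<sigma> M \<longleftrightarrow> (\<exists>q<n. \<sigma> ! q = n - 1 \<and> \<not> ltr_max \<sigma> q)"
proof
  have len: "length \<sigma> = n" and dist: "distinct \<sigma>"
    using perm unfolding is_perm_def by auto
  assume "sole_dominator \<sigma> M"
  then obtain i where "i < length \<sigma>" "\<forall>j<i. j \<noteq> M \<longrightarrow> \<sigma> ! j < \<sigma> ! i" "M < i"
      "\<sigma> ! i < \<sigma> ! M"
    using dist by (rule sole_dominatorE)
  then have i: "i < n" "\<forall>j<i. j \<noteq> M \<longrightarrow> \<sigma> ! j < \<sigma> ! i" "M < i" "\<sigma> ! i < n"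
    using len M by simp_all
  then have "n - 1 \<in> {1..n}"
    using is_perm_nth_in[OF perm i(1)] by auto
  then obtain q where q: "q < n" "\<sigma> ! q = n - 1"
    using is_perm_position[OF perm] by blast
  have "M < q"
  proof (rule ccontr)
    assume "\<not> M < q"
    then have "q < i" "q \<noteq> M"
      using q M i is_perm_nth_eq_iff[OF perm q(1) M(1)] by auto
    then show False
      using i q by fastforce
  qed
  then have "\<not> ltr_max \<sigma> q"
    unfolding ltr_max_def using q M by auto
  then show "\<exists>q<n. \<sigma> ! q = n - 1 \<and> \<not> ltr_max \<sigma> q"
    using q by auto
next
  assume "\<exists>q<n. \<sigma> ! q = n - 1 \<and> \<not> ltr_max \<sigma> q"
  then obtain q where q: "q < n" "\<sigma> ! q = n - 1" "\<not> ltr_max \<sigma> q"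
    by blast
  have "\<sigma> ! j < \<sigma> ! q" if "j < q" "j \<noteq> M" for j
  proof -
    have "j < n"
      using that q by simp
    have "\<sigma> ! j \<le> n" "\<sigma> ! j \<noteq> \<sigma> ! M" "\<sigma> ! j \<noteq> \<sigma> ! q"
      using that is_perm_nth_in[OF perm \<open>j < n\<close>] is_perm_nth_eq_iff[OF perm \<open>j < n\<close>] q(1) M(1)
      by auto
    then show ?thesis
      using q M by linarith
  qed
  then show "sole_dominator \<sigma> M"
    unfolding sole_dominator_def using q perm by (auto simp: is_perm_def)
qed

lemma nth_le_last_ltr_max:
  assumes "ltr_max \<sigma> i" "i < j" "\<forall>l. i < l \<and> l < j \<longrightarrow> \<not> ltr_max \<sigma> l"
  shows "l < j \<Longrightarrow> \<sigma> ! l \<le> \<sigma> ! i"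
proof (induction l rule: less_induct)
  case (less l)
  show ?case
  proof (cases "ltr_max \<sigma> l")
    case True
    then have "l \<le> i"
      using assms(3) less.prems by (metis not_le)
    then have "l < i \<or> l = i"
      by auto
    then show ?thesis
      using assms(1) unfolding ltr_max_def by auto
  next
    case False
    then obtain k where "k < l" "\<sigma> ! l \<le> \<sigma> ! k"
      by (auto simp: not_ltr_max_iff)
    then show ?thesis
      using less by fastforce
  qed
qed

lemma sole_dominator_between_iff:
  assumes dist: "distinct \<sigma>" and ijk: "i < j" "j < k" "k < length \<sigma>"
    and maxima: "ltr_max \<sigma> i" "ltr_max \<sigma> j" "ltr_max \<sigma> k"
    and adjacent: "\<forall>l. i < l \<and> l < k \<and> l \<noteq> j \<longrightarrow> \<not> ltr_max \<sigma> l"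
  shows "sole_dominator \<sigma> j \<longleftrightarrow> (\<exists>t. j < t \<and> t < k \<and> \<not> ltr_max \<sigma> t \<and> \<sigma> ! i < \<sigma> ! t)"
proof
  assume "sole_dominator \<sigma> j"
  then obtain t where t: "\<not> ltr_max \<sigma> t" "\<forall>l<t. l \<noteq> j \<longrightarrow> \<sigma> ! l < \<sigma> ! t"
      "j < t" "\<sigma> ! t < \<sigma> ! j"
    using dist by (rule sole_dominatorE)
  have "\<sigma> ! j < \<sigma> ! k"
    using maxima ijk unfolding ltr_max_def by auto
  then have "t < k"
    using t maxima(3) ijk by (metis linorder_neqE_nat order.asym order.strict_trans)
  moreover have "\<sigma> ! i < \<sigma> ! t"
    using t ijk by auto
  ultimately show "\<exists>t. j < t \<and> t < k \<and> \<not> ltr_max \<sigma> t \<and> \<sigma> ! i < \<sigma> ! t"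
    using t by auto
next
  \<comment> \<open>the first such \<open>t\<close> works: every earlier entry other than \<open>\<sigma> ! j\<close> is at most \<open>\<sigma> ! i\<close>\<close>
  define P where "P t \<longleftrightarrow> j < t \<and> t < k \<and> \<not> ltr_max \<sigma> t \<and> \<sigma> ! i < \<sigma> ! t" for t
  assume "\<exists>t. j < t \<and> t < k \<and> \<not> ltr_max \<sigma> t \<and> \<sigma> ! i < \<sigma> ! t"
  then have "P (LEAST t. P t)"
    unfolding P_def by (rule LeastI_ex)
  then obtain t where t: "j < t" "t < k" "\<not> ltr_max \<sigma> t" "\<sigma> ! i < \<sigma> ! t"
      and first: "\<And>l. l < t \<Longrightarrow> \<not> P l"
    using not_less_Least unfolding P_def by blast
  have below: "\<sigma> ! l < \<sigma> ! t" if "l < t" "l \<noteq> j" for l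
  proof (cases "l < j")
    case True
    then have "\<sigma> ! l \<le> \<sigma> ! i"
      using nth_le_last_ltr_max[OF maxima(1) ijk(1)] adjacent ijk by auto
    then show ?thesis
      using t by simp
  next
    case False
    then have "\<sigma> ! l \<le> \<sigma> ! i"
      using first[OF that(1)] that adjacent ijk t unfolding P_def by auto
    then show ?thesis
      using t by simp
  qed
  have "t < length \<sigma>"
    using t ijk by simp
  then show "sole_dominator \<sigma> j"
    unfolding sole_dominator_def using t below by blast
qed

lemma adjacent_ltr_maximaE:
  assumes "ltr_max \<sigma> M" "0 < m" "m < M"
  obtains i k where "i < m" "m < k" "k \<le> M" "ltr_max \<sigma> i" "ltr_max \<sigma> k"
    "\<forall>l. i < l \<and> l < k \<and> l \<noteq> m \<longrightarrow> \<not> ltr_max \<sigma> l"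
proof -
  define i where "i = (GREATEST i. i < m \<and> ltr_max \<sigma> i)"
  define k where "k = (LEAST k. m < k \<and> ltr_max \<sigma> k)"
  have "0 < m \<and> ltr_max \<sigma> 0"
    using assms(2) by (simp add: ltr_max_def)
  then have i: "i < m \<and> ltr_max \<sigma> i"
    unfolding i_def by (rule GreatestI_nat[where b = m]) simp
  have i_greatest: "l \<le> i" if "l < m" "ltr_max \<sigma> l" for l
    unfolding i_def by (rule Greatest_le_nat[where b = m]) (use that in auto)
  have k: "m < k \<and> ltr_max \<sigma> k"
    unfolding k_def by (rule LeastI[of _ M]) (use assms in simp)
  have k_least: "k \<le> l" if "m < l" "ltr_max \<sigma> l" for l
    unfolding k_def by (rule Least_le) (use that in simp)
  have "\<forall>l. i < l \<and> l < k \<and> l \<noteq> m \<longrightarrow> \<not> ltr_max \<sigma> l"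
    using i_greatest k_least by (metis leD linorder_neqE_nat)
  then show ?thesis
    using that i k k_least[of M] assms by blast
qed

lemma sole_dominators_iff_conditions:
  assumes perm: "is_perm n \<sigma>" and n: "1 \<le> n"
  shows "(\<forall>m<n. ltr_max \<sigma> m \<longrightarrow> sole_dominator \<sigma> m) \<longleftrightarrow>
    (\<exists>i < n. \<sigma> ! i = n - 1 \<and> \<not> ltr_max \<sigma> i) \<and>
    (1 < n \<and> \<not> ltr_max \<sigma> 1) \<and>
    (\<forall>i j k. i < j \<and> j < k \<and> k < n \<and> ltr_max \<sigma> i \<and> ltr_max \<sigma> j \<and> ltr_max \<sigma> k \<and>
        (\<forall>l. i < l \<and> l < k \<and> l \<noteq> j \<longrightarrow> \<not> ltr_max \<sigma> l) \<longrightarrow>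
        (\<exists>t. j < t \<and> t < k \<and> \<not> ltr_max \<sigma> t \<and> \<sigma> ! t > \<sigma> ! i))"
    (is "?all \<longleftrightarrow> ?max \<and> ?first \<and> ?between")
proof -
  have len: "length \<sigma> = n" and dist: "distinct \<sigma>"
    using perm unfolding is_perm_def by auto
  obtain M where M: "M < n" "\<sigma> ! M = n" and ltr_max_M: "ltr_max \<sigma> M"
    and ltr_max_le_M: "\<forall>m<n. ltr_max \<sigma> m \<longrightarrow> m \<le> M"
    using perm n by (rule is_perm_max_position)
  show ?thesis
  proof
    assume all: ?all
    have "?first"
      using all n sole_dominator_0_iff[OF dist] len by (simp add: ltr_max_def)
    moreover have "?max"
      using all ltr_max_M sole_dominator_max_iff[OF perm M] M by blast
    moreover have "?between"
      using all sole_dominator_between_iff[OF dist] len by auto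
    ultimately show "?max \<and> ?first \<and> ?between"
      by blast
  next
    assume conditions: "?max \<and> ?first \<and> ?between"
    show ?all
    proof (intro allI impI)
      fix m
      assume m: "m < n" "ltr_max \<sigma> m"
      consider "m = 0" | "m = M" | "0 < m" "m < M"
        using ltr_max_le_M m by fastforce
      then show "sole_dominator \<sigma> m"
      proof cases
        case 1
        then show ?thesis
          using conditions sole_dominator_0_iff[OF dist] len by simp
      next
        case 2
        then show ?thesis
          using conditions sole_dominator_max_iff[OF perm M] by simp
      next
        case 3
        obtain i k where "i < m" "m < k" "k \<le> M" "ltr_max \<sigma> i" "ltr_max \<sigma> k"
          "\<forall>l. i < l \<and> l < k \<and> l \<noteq> m \<longrightarrow> \<not> ltr_max \<sigma> l"
          using ltr_max_M 3 by (rule adjacent_ltr_maximaE)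
        then show ?thesis
          using conditions sole_dominator_between_iff[OF dist] m M len by fastforce
      qed
    qed
  qed
qed

theorem mainTheorem4:
  fixes p n :: nat and \<sigma> :: "nat list"
  assumes "n \<ge> 1" and "is_perm n \<sigma>"
  shows "\<sigma> \<in> basis p \<longleftrightarrow>
    card {i. i < n \<and> \<not> ltr_max \<sigma> i} = p + 1 \<and>
    (\<exists>i < n. \<sigma> ! i = n - 1 \<and> \<not> ltr_max \<sigma> i) \<and>
    (1 < n \<and> \<not> ltr_max \<sigma> 1) \<and>
    (\<forall>i j k. i < j \<and> j < k \<and> k < n \<and> ltr_max \<sigma> i \<and> ltr_max \<sigma> j \<and> ltr_max \<sigma> k \<and>
        (\<forall>l. i < l \<and> l < k \<and> l \<noteq> j \<longrightarrow> \<not> ltr_max \<sigma> l) \<longrightarrow>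
        (\<exists>t. j < t \<and> t < k \<and> \<not> ltr_max \<sigma> t \<and> \<sigma> ! t > \<sigma> ! i))"
proof -
  have "card (nonmaxima \<sigma>) = card {i. i < n \<and> \<not> ltr_max \<sigma> i}"
    using assms(2) by (simp add: nonmaxima_eq is_perm_def)
  then show ?thesis
    unfolding basis_iff_sole_dominators[OF assms(2)] sole_dominators_iff_conditions[OF assms(2,1)]
    by simp
qed

end
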